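(* Consider the following market for a sin good subject to a per-unit tax $t>0$. There are $N$ firms $k=1,\dots,N$ producing at common constant marginal cost $m$ and competing à la Bertrand–Nash. Each firm $k$ simultaneously chooses a salient posted price $p^s_k$ and a shrouded tax surcharge $\tau_k\in\{0,t\}$ (it "shrouds" if $\tau_k=t$); its effective consumer price is $p_k=p^s_k+\tau_k$ and its producer price is $p_k-t$. A fraction $\lambda$ of consumers, with $0<\lambda<1$, are attentive: they observe all effective prices and all shrouding decisions, and buying from a shrouding firm entails a fixed disutility $s\ge 0$. The remaining fraction $1-\lambda$ are inattentive: they observe posted prices but perceive the surcharge of a shrouding firm as $\theta t$ with $\theta<1$; demand of inattentive consumers is split equally among the firms with the lowest posted price. Firms cannot price-discriminate between consumer types. If $N\ge 4$, there exists an asymmetric pure-strategy equilibrium with two market segments: (i) at least two firms shroud taxes, choosing $p^s_k=m$ and $\tau_k=t$, and serve all inattentive consumers; and (ii) at least two firms do not shroud taxes, choosing $p^s_k=m+t$ and $\tau_k=0$, and serve all attentive consumers.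
   Context: Consumers otherwise behave as cost-minimizing buyers of a homogeneous good given their (perceived) prices. *)

theory Defs
  imports Complex_Main
begin

text \<open>Firms are indexed by 0,...,N-1. A strategy profile is given by
  posted (salient) prices ps :: nat => real and shrouding decisions sh :: nat => bool
  (sh k means tau_k = t, otherwise tau_k = 0). Consumer mass is normalised to 1.\<close>

definition surcharge :: "real \<Rightarrow> (nat \<Rightarrow> bool) \<Rightarrow> nat \<Rightarrow> real" where
  "surcharge t sh k = (if sh k then t else 0)"

definition eff_price :: "real \<Rightarrow> (nat \<Rightarrow> real) \<Rightarrow> (nat \<Rightarrow> bool) \<Rightarrow> nat \<Rightarrow> real" where
  "eff_price t ps sh k = ps k + surcharge t sh k"

definition att_cost :: "real \<Rightarrow> real \<Rightarrow> (nat \<Rightarrow> real) \<Rightarrow> (nat \<Rightarrow> bool) \<Rightarrow> nat \<Rightarrow> real" where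
  "att_cost t s ps sh k = eff_price t ps sh k + (if sh k then s else 0)"

definition inatt_cost :: "real \<Rightarrow> real \<Rightarrow> (nat \<Rightarrow> real) \<Rightarrow> (nat \<Rightarrow> bool) \<Rightarrow> nat \<Rightarrow> real" where
  "inatt_cost t th ps sh k = ps k + (if sh k then th * t else 0)"

definition argmins :: "nat \<Rightarrow> (nat \<Rightarrow> real) \<Rightarrow> nat set" where
  "argmins N f = {k. k < N \<and> (\<forall>j<N. f k \<le> f j)}"

text \<open>Firms chosen by attentive consumers: cost minimisers; an attentive consumer indifferent
  between a shrouding and a non-shrouding firm buys from a non-shrouding one.\<close>
definition att_set :: "nat \<Rightarrow> real \<Rightarrow> real \<Rightarrow> (nat \<Rightarrow> real) \<Rightarrow> (nat \<Rightarrow> bool) \<Rightarrow> nat set" where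
  "att_set N t s ps sh =
     (let M = argmins N (att_cost t s ps sh) in
      if (\<exists>k\<in>M. \<not> sh k) then {k\<in>M. \<not> sh k} else M)"

definition inatt_set :: "nat \<Rightarrow> real \<Rightarrow> real \<Rightarrow> (nat \<Rightarrow> real) \<Rightarrow> (nat \<Rightarrow> bool) \<Rightarrow> nat set" where
  "inatt_set N t th ps sh = argmins N (inatt_cost t th ps sh)"

definition dem_att :: "nat \<Rightarrow> real \<Rightarrow> real \<Rightarrow> real \<Rightarrow> (nat \<Rightarrow> real) \<Rightarrow> (nat \<Rightarrow> bool) \<Rightarrow> nat \<Rightarrow> real" where
  "dem_att N t s lam ps sh k =
     (if k \<in> att_set N t s ps sh then lam / real (card (att_set N t s ps sh)) else 0)"

definition dem_inatt :: "nat \<Rightarrow> real \<Rightarrow> real \<Rightarrow> real \<Rightarrow> (nat \<Rightarrow> real) \<Rightarrow> (nat \<Rightarrow> bool) \<Rightarrow> nat \<Rightarrow> real" where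
  "dem_inatt N t th lam ps sh k =
     (if k \<in> inatt_set N t th ps sh then (1 - lam) / real (card (inatt_set N t th ps sh)) else 0)"

definition profit :: "nat \<Rightarrow> real \<Rightarrow> real \<Rightarrow> real \<Rightarrow> real \<Rightarrow> real \<Rightarrow>
    (nat \<Rightarrow> real) \<Rightarrow> (nat \<Rightarrow> bool) \<Rightarrow> nat \<Rightarrow> real" where
  "profit N m t s th lam ps sh k =
     (eff_price t ps sh k - t - m) * (dem_att N t s lam ps sh k + dem_inatt N t th lam ps sh k)"

definition is_equilibrium :: "nat \<Rightarrow> real \<Rightarrow> real \<Rightarrow> real \<Rightarrow> real \<Rightarrow> real \<Rightarrow>
    (nat \<Rightarrow> real) \<Rightarrow> (nat \<Rightarrow> bool) \<Rightarrow> bool" where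
  "is_equilibrium N m t s th lam ps sh \<longleftrightarrow>
     (\<forall>k<N. \<forall>p'::real. \<forall>b::bool.
        profit N m t s th lam (ps(k := p')) (sh(k := b)) k \<le> profit N m t s th lam ps sh k)"

end

theory Submission
  imports Defs
begin

text \<open>In the two-segment profile every firm sells at marginal cost plus tax, so all profits are
  zero. A deviation with a positive margin loses both segments: an inattentive consumer still
  finds a shrouding rival cheaper, since \<open>\<theta> t < t\<close>, and an attentive consumer still finds a
  non-shrouding rival cheaper, since \<open>s \<ge> 0\<close>. Two firms per segment guarantee that such rivals
  remain after any single firm deviates.\<close>

lemma argmins_subset: "argmins N f \<subseteq> {..<N}"
  unfolding argmins_def by auto

lemma notin_argmins: "j < N \<Longrightarrow> f j < f k \<Longrightarrow> k \<notin> argmins N f"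
  unfolding argmins_def by force

lemma att_set_subset_argmins: "att_set N t s ps sh \<subseteq> argmins N (att_cost t s ps sh)"
  unfolding att_set_def Let_def by auto

lemma finite_att_set: "finite (att_set N t s ps sh)"
  using att_set_subset_argmins argmins_subset by (metis finite_lessThan finite_subset)

lemma finite_inatt_set: "finite (inatt_set N t th ps sh)"
  unfolding inatt_set_def using argmins_subset by (metis finite_lessThan finite_subset)

lemma sum_dem_att:
  assumes "att_set N t s ps sh \<noteq> {}"
  shows "(\<Sum>k\<in>att_set N t s ps sh. dem_att N t s lam ps sh k) = lam"
  using assms finite_att_set by (simp add: dem_att_def)

lemma sum_dem_inatt:
  assumes "inatt_set N t th ps sh \<noteq> {}"
  shows "(\<Sum>k\<in>inatt_set N t th ps sh. dem_inatt N t th lam ps sh k) = 1 - lam"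
  using assms finite_inatt_set by (simp add: dem_inatt_def)

lemma dem_att_eq_0_if_undercut:
  assumes "j < N" "att_cost t s ps sh j < att_cost t s ps sh k"
  shows "dem_att N t s lam ps sh k = 0"
proof -
  have "k \<notin> att_set N t s ps sh"
    using notin_argmins[OF assms] att_set_subset_argmins by blast
  then show ?thesis by (simp add: dem_att_def)
qed

lemma dem_inatt_eq_0_if_undercut:
  assumes "j < N" "inatt_cost t th ps sh j < inatt_cost t th ps sh k"
  shows "dem_inatt N t th lam ps sh k = 0"
  using notin_argmins[OF assms] by (simp add: dem_inatt_def inatt_set_def)

lemma profit_nonpos_if_margin_nonpos:
  assumes "0 < lam" "lam < 1" "eff_price t ps sh k - t - m \<le> 0"
  shows "profit N m t s th lam ps sh k \<le> 0"
proof -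
  have "0 \<le> dem_att N t s lam ps sh k + dem_inatt N t th lam ps sh k"
    using assms by (simp add: dem_att_def dem_inatt_def)
  then show ?thesis
    using assms(3) by (simp add: profit_def mult_nonpos_nonneg)
qed

lemma exists_other_element:
  assumes "2 \<le> card A"
  shows "\<exists>j\<in>A. j \<noteq> k"
proof (rule ccontr)
  assume "\<not> (\<exists>j\<in>A. j \<noteq> k)"
  then have "A \<subseteq> {k}" by blast
  then have "card A \<le> 1" using card_mono[of "{k}" A] by simp
  with assms show False by simp
qed

definition segment_prices :: "real \<Rightarrow> real \<Rightarrow> nat set \<Rightarrow> nat \<Rightarrow> real" where
  "segment_prices m t S k = (if k \<in> S then m else m + t)"

lemma profit_segments_eq_0:
  "profit N m t s th lam (segment_prices m t S) (\<lambda>k. k \<in> S) k = 0"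
  by (simp add: profit_def eff_price_def surcharge_def segment_prices_def)

lemma inatt_set_segments:
  assumes "S \<subseteq> {..<N}" "S \<noteq> {}" "t > 0" "th < 1"
  shows "inatt_set N t th (segment_prices m t S) (\<lambda>k. k \<in> S) = S"
proof -
  have "th * t < t" using assms by simp
  then have cost: "inatt_cost t th (segment_prices m t S) (\<lambda>k. k \<in> S) k =
      (if k \<in> S then m + th * t else m + t)"
    and "m + th * t < m + t" for k
    by (simp_all add: inatt_cost_def segment_prices_def)
  with assms(1,2) show ?thesis
    unfolding inatt_set_def argmins_def cost by (auto simp: not_le)
qed

lemma att_set_segments:
  assumes "S \<subseteq> {..<N}" "{..<N} - S \<noteq> {}" "s \<ge> 0"
  shows "att_set N t s (segment_prices m t S) (\<lambda>k. k \<in> S) = {..<N} - S"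
proof -
  let ?M = "argmins N (att_cost t s (segment_prices m t S) (\<lambda>k. k \<in> S))"
  have "{..<N} - S \<subseteq> ?M"
    using assms(3)
    by (auto simp: argmins_def att_cost_def eff_price_def surcharge_def segment_prices_def)
  moreover have "?M \<subseteq> {..<N}" by (rule argmins_subset)
  ultimately show ?thesis
    using assms(2) unfolding att_set_def Let_def by auto
qed

lemma segments_is_equilibrium:
  assumes "t > 0" "0 < lam" "lam < 1" "s \<ge> 0" "th < 1"
    and "S \<subseteq> {..<N}" "card S \<ge> 2" "card ({..<N} - S) \<ge> 2"
  shows "is_equilibrium N m t s th lam (segment_prices m t S) (\<lambda>k. k \<in> S)"
  unfolding is_equilibrium_def profit_segments_eq_0
proof (intro allI impI)
  fix k p' b
  define ps where "ps = (segment_prices m t S)(k := p')"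
  define sh where "sh = (\<lambda>k. k \<in> S)(k := b)"
  show "profit N m t s th lam ps sh k \<le> 0"
  proof (cases "eff_price t ps sh k - t - m \<le> 0")
    case True
    with assms(2,3) show ?thesis by (rule profit_nonpos_if_margin_nonpos)
  next
    case False
    then have margin: "p' + (if b then t else 0) > m + t"
      by (simp add: ps_def sh_def eff_price_def surcharge_def)
    obtain j1 where "j1 \<in> S" "j1 \<noteq> k" using exists_other_element[OF assms(7)] by blast
    with assms(6) have j1: "j1 < N" "ps j1 = m" "sh j1"
      by (auto simp: ps_def sh_def segment_prices_def)
    obtain j2 where "j2 \<in> {..<N} - S" "j2 \<noteq> k" using exists_other_element[OF assms(8)] by blast
    then have j2: "j2 < N" "ps j2 = m + t" "\<not> sh j2"
      by (auto simp: ps_def sh_def segment_prices_def)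
    have "th * t < t" using assms(1,5) by simp
    then have "inatt_cost t th ps sh j1 < inatt_cost t th ps sh k"
      using margin j1 by (cases b) (auto simp: inatt_cost_def ps_def sh_def)
    moreover have "att_cost t s ps sh j2 < att_cost t s ps sh k"
      using margin j2 assms(4)
      by (cases b) (auto simp: att_cost_def eff_price_def surcharge_def ps_def sh_def)
    ultimately show ?thesis
      using dem_inatt_eq_0_if_undercut[OF j1(1)] dem_att_eq_0_if_undercut[OF j2(1)]
      by (simp add: profit_def)
  qed
qed

theorem lemma3:
  fixes N :: nat and m t s th lam :: real
  assumes "t > 0" and "0 < lam" and "lam < 1" and "s \<ge> 0" and "th < 1" and "N \<ge> 4"
  shows "\<exists>S ps sh.
           S \<subseteq> {..<N} \<and> card S \<ge> 2 \<and> card ({..<N} - S) \<ge> 2 \<and>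
           (\<forall>k\<in>S. ps k = m \<and> sh k) \<and>
           (\<forall>k\<in>{..<N} - S. ps k = m + t \<and> \<not> sh k) \<and>
           is_equilibrium N m t s th lam ps sh \<and>
           (\<Sum>k\<in>S. dem_inatt N t th lam ps sh k) = 1 - lam \<and>
           (\<Sum>k\<in>{..<N} - S. dem_att N t s lam ps sh k) = lam"
proof -
  define S where "S = {0::nat, 1}"
  have S: "S \<subseteq> {..<N}" "card S = 2" "card ({..<N} - S) \<ge> 2"
    using assms(6) by (auto simp: S_def lessThan_atLeast0 atLeast0LessThan[symmetric])
  then have nonempty: "S \<noteq> {}" "{..<N} - S \<noteq> {}" by auto
  let ?ps = "segment_prices m t S" and ?sh = "\<lambda>k. k \<in> S"
  have "is_equilibrium N m t s th lam ?ps ?sh"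
    using segments_is_equilibrium[OF assms(1-5) S(1)] S(2,3) by simp
  moreover have "(\<Sum>k\<in>S. dem_inatt N t th lam ?ps ?sh k) = 1 - lam"
    using sum_dem_inatt[of N t th ?ps ?sh lam] nonempty(1)
    by (simp add: inatt_set_segments[OF S(1) nonempty(1) assms(1,5)])
  moreover have "(\<Sum>k\<in>{..<N} - S. dem_att N t s lam ?ps ?sh k) = lam"
    using sum_dem_att[of N t s ?ps ?sh lam] nonempty(2)
    by (simp add: att_set_segments[OF S(1) nonempty(2) assms(4)])
  ultimately show ?thesis
    using S by (intro exI[of _ S] exI[of _ ?ps] exI[of _ ?sh]) (auto simp: segment_prices_def)
qed

end
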